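(* Let $P$ be a finite $(3+1)$-free poset and let $\mathsf a=a_{n+1}a_n\cdots a_1$ and $\mathsf b=b_nb_{n-1}\cdots b_1$ be $P$-strictly decreasing words such that (i) $a_i\sim_Pb_i$ for all $i\in[n]$; (ii) $a_{i+1}\sim_Pb_i$ for all $i\in[n]$; (iii) $a_i<_Pb_{i+1}$ for all $i\in[n-1]$; (iv) $b_i<_Pa_{i+2}$ for all $i\in[n-1]$. Then $\mathbf{u}_{\mathsf a}\mathbf{u}_{\mathsf b}\equiv\mathbf{u}_{\mathsf b}\mathbf{u}_{\mathsf a}\pmod{I^P_{\mathrm{plac}}}$.
   Context: $a<_Pb$: strict order; $a\sim_Pb$: incomparable or equal. A word $w_1\cdots w_m$ is $P$-strictly decreasing if $w_1>_P\cdots>_Pw_m$. $\mathcal{U}_P=\mathbb{Z}\langle u_a:a\in P\rangle$, $\mathbf{u}_w=u_{w_1}\cdots u_{w_m}$. $I^P_{\mathrm{plac}}$ is the two-sided ideal generated by: $u_bu_au_c-u_bu_cu_a$ when $a<_Pb$, $c\not<_Pb$, $a<_Pc$; $u_cu_au_b-u_au_cu_b$ when $b\not<_Pa$, $b<_Pc$, $a<_Pc$; $u_cu_au_b-u_bu_cu_a$ when $a\sim_Pb$, $b\sim_Pc$, $a<_Pc$. *)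

theory Defs
  imports Main
begin

text \<open>The free associative algebra Z<u_a : a in P> is modelled as functions from words
  (lists over P) to int; only finitely supported functions are polynomials.\<close>

type_synonym 'a ncpoly = "'a list \<Rightarrow> int"

definition ncmul :: "'a ncpoly \<Rightarrow> 'a ncpoly \<Rightarrow> 'a ncpoly" where
  "ncmul f g = (\<lambda>w. \<Sum>i\<le>length w. f (take i w) * g (drop i w))"

definition ncmon :: "'a list \<Rightarrow> 'a ncpoly" where
  "ncmon w = (\<lambda>v. if v = w then 1 else 0)"

definition fin_supp :: "'a ncpoly \<Rightarrow> bool" where
  "fin_supp f \<longleftrightarrow> finite {w. f w \<noteq> 0}"

inductive_set two_sided_ideal :: "'a ncpoly set \<Rightarrow> 'a ncpoly set" for G where
  gen: "g \<in> G \<Longrightarrow> g \<in> two_sided_ideal G"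
| zero: "(\<lambda>_. 0) \<in> two_sided_ideal G"
| add: "f \<in> two_sided_ideal G \<Longrightarrow> g \<in> two_sided_ideal G \<Longrightarrow> (\<lambda>w. f w + g w) \<in> two_sided_ideal G"
| neg: "f \<in> two_sided_ideal G \<Longrightarrow> (\<lambda>w. - f w) \<in> two_sided_ideal G"
| mult: "f \<in> two_sided_ideal G \<Longrightarrow> fin_supp r \<Longrightarrow> fin_supp s \<Longrightarrow>
          ncmul (ncmul r f) s \<in> two_sided_ideal G"

definition sim_P :: "'a::order \<Rightarrow> 'a \<Rightarrow> bool" where
  "sim_P a b \<longleftrightarrow> \<not> a < b \<and> \<not> b < a"

definition plac_gens :: "('a::order) ncpoly set" where
  "plac_gens =
     {(\<lambda>w. ncmon [b,a,c] w - ncmon [b,c,a] w) | a b c. a < b \<and> \<not> c < b \<and> a < c}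
   \<union> {(\<lambda>w. ncmon [c,a,b] w - ncmon [a,c,b] w) | a b c. \<not> b < a \<and> b < c \<and> a < c}
   \<union> {(\<lambda>w. ncmon [c,a,b] w - ncmon [b,c,a] w) | a b c. sim_P a b \<and> sim_P b c \<and> a < c}"

definition I_plac :: "('a::order) ncpoly set" where
  "I_plac = two_sided_ideal plac_gens"

definition three_one_free :: "'a::order itself \<Rightarrow> bool" where
  "three_one_free _ \<longleftrightarrow> \<not> (\<exists>x y z d::'a. x < y \<and> y < z \<and>
        \<not> (d \<le> x) \<and> \<not> (x \<le> d) \<and> \<not> (d \<le> y) \<and> \<not> (y \<le> d) \<and> \<not> (d \<le> z) \<and> \<not> (z \<le> d))"

definition strictly_decreasing :: "('a::order) list \<Rightarrow> bool" where
  "strictly_decreasing w \<longleftrightarrow> sorted_wrt (>) w"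

end

theory Submission
  imports Defs
begin

text \<open>Write \<open>w \<equiv> w'\<close> for \<open>u\<^sub>w \<equiv> u\<^sub>w' mod I_plac\<close>; this is a congruence on words, so it
  suffices to move each letter \<open>b\<^sub>i\<close> across \<open>\<^bold>a\<close> from right to left. Split \<open>\<^bold>a\<close> as
  \<open>Z a\<^sub>i\<^sub>+\<^sub>1 a\<^sub>i X\<close>, where every letter of \<open>X\<close> lies below \<open>b\<^sub>i\<close> (by (iii)) and every letter of
  \<open>Z\<close> lies above it (by (iv)). The first relation moves \<open>b\<^sub>i\<close> across \<open>X\<close>, the third one turns
  \<open>a\<^sub>i\<^sub>+\<^sub>1 a\<^sub>i b\<^sub>i\<close> into \<open>b\<^sub>i a\<^sub>i\<^sub>+\<^sub>1 a\<^sub>i\<close> using (i) and (ii), and the second one moves \<open>b\<^sub>i\<close>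
  across \<open>Z\<close>.\<close>

definition plac_equiv :: "('a::order) list \<Rightarrow> 'a list \<Rightarrow> bool" where
  "plac_equiv w w' \<longleftrightarrow> (\<lambda>v. ncmon w v - ncmon w' v) \<in> I_plac"


lemma ncmul_diff_right: "ncmul r (\<lambda>v. f v - g v) = (\<lambda>v. ncmul r f v - ncmul r g v)"
  unfolding ncmul_def by (simp add: sum_subtractf right_diff_distrib)

lemma ncmul_diff_left: "ncmul (\<lambda>v. f v - g v) s = (\<lambda>v. ncmul f s v - ncmul g s v)"
  unfolding ncmul_def by (simp add: sum_subtractf left_diff_distrib)

lemma take_drop_eq_iff_append:
  assumes "i \<le> length v"
  shows "(take i v = x \<and> drop i v = w) \<longleftrightarrow> (i = length x \<and> v = x @ w)"
  using assms append_take_drop_id[of i v] by auto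

lemma ncmul_ncmon: "ncmul (ncmon x) (ncmon w) = ncmon (x @ w)"
proof
  fix v :: "'a list"
  have "ncmul (ncmon x) (ncmon w) v
      = (\<Sum>i\<le>length v. if i = length x then (if v = x @ w then 1 else 0) else 0)"
    unfolding ncmul_def ncmon_def
  proof (rule sum.cong)
    fix i assume "i \<in> {..length v}"
    then have "i \<le> length v" by simp
    have "(if take i v = x then 1 else 0) * (if drop i v = w then 1 else (0::int))
        = (if take i v = x \<and> drop i v = w then 1 else 0)" by simp
    also have "\<dots> = (if i = length x \<and> v = x @ w then 1 else 0)"
      unfolding take_drop_eq_iff_append[OF \<open>i \<le> length v\<close>] ..
    finally show "(if take i v = x then 1 else 0) * (if drop i v = w then 1 else 0)
        = (if i = length x then (if v = x @ w then 1 else 0) else (0::int))"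
      by simp
  qed simp
  also have "\<dots> = ncmon (x @ w) v"
    unfolding ncmon_def by (auto simp: sum.delta')
  finally show "ncmul (ncmon x) (ncmon w) v = ncmon (x @ w) v" .
qed

lemma fin_supp_ncmon: "fin_supp (ncmon x)"
proof -
  have "{w. ncmon x w \<noteq> 0} = {x}" by (auto simp: ncmon_def)
  then show ?thesis unfolding fin_supp_def by simp
qed


lemma plac_equiv_refl: "plac_equiv w w"
  unfolding plac_equiv_def I_plac_def by (simp add: two_sided_ideal.zero)

lemma plac_equiv_trans: "plac_equiv u v \<Longrightarrow> plac_equiv v w \<Longrightarrow> plac_equiv u w"
  unfolding plac_equiv_def I_plac_def
  by (drule (1) two_sided_ideal.add) simp

lemma plac_equiv_cong: "plac_equiv w w' \<Longrightarrow> plac_equiv (x @ w @ y) (x @ w' @ y)"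
  unfolding plac_equiv_def I_plac_def
  by (drule two_sided_ideal.mult[OF _ fin_supp_ncmon fin_supp_ncmon, of _ _ x y])
     (simp add: ncmul_diff_right ncmul_diff_left ncmul_ncmon)

lemma plac_equiv_gen: "(\<lambda>v. ncmon w v - ncmon w' v) \<in> plac_gens \<Longrightarrow> plac_equiv w w'"
  unfolding plac_equiv_def I_plac_def by (rule two_sided_ideal.gen)

lemma plac_equiv_bac_bca: "a < b \<Longrightarrow> \<not> c < b \<Longrightarrow> a < c \<Longrightarrow> plac_equiv [b, a, c] [b, c, a]"
  by (rule plac_equiv_gen, unfold plac_gens_def) (rule UnI1, rule UnI1, fast)

lemma plac_equiv_cab_acb: "\<not> b < a \<Longrightarrow> b < c \<Longrightarrow> a < c \<Longrightarrow> plac_equiv [c, a, b] [a, c, b]"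
  by (rule plac_equiv_gen, unfold plac_gens_def) (rule UnI1, rule UnI2, fast)

lemma plac_equiv_cab_bca: "sim_P a b \<Longrightarrow> sim_P b c \<Longrightarrow> a < c \<Longrightarrow> plac_equiv [c, a, b] [b, c, a]"
  by (rule plac_equiv_gen, unfold plac_gens_def) (rule UnI2, fast)


lemma plac_equiv_move_below:
  fixes h y :: "'a::order"
  assumes "sorted_wrt (>) (h # xs)" and "\<forall>x\<in>set xs. x < y" and "\<not> y < h"
  shows "plac_equiv (h # xs @ [y]) (h # y # xs)"
  using assms
proof (induction xs arbitrary: h)
  case Nil
  then show ?case by (simp add: plac_equiv_refl)
next
  case (Cons x xs)
  then have "x < y" "x < h" by simp_all
  then have "plac_equiv (x # xs @ [y]) (x # y # xs)"
    using Cons by simp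
  from plac_equiv_cong[OF this, of "[h]" "[]"]
  have "plac_equiv (h # x # xs @ [y]) (h # x # y # xs)" by simp
  moreover have "plac_equiv [h, x, y] [h, y, x]"
    using plac_equiv_bac_bca \<open>x < y\<close> \<open>x < h\<close> Cons.prems(3) by blast
  from plac_equiv_cong[OF this, of "[]" xs]
  have "plac_equiv (h # x # y # xs) (h # y # x # xs)" by simp
  ultimately show ?case by (simp add: plac_equiv_trans)
qed

lemma plac_equiv_move_above:
  fixes t y :: "'a::order"
  assumes "sorted_wrt (>) (zs @ [t])" and "\<forall>z\<in>set zs. y < z" and "\<not> t < y"
  shows "plac_equiv (zs @ [y, t]) (y # zs @ [t])"
  using assms
proof (induction zs arbitrary: t rule: rev_induct)
  case Nil
  then show ?case by (simp add: plac_equiv_refl)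
next
  case (snoc z zs)
  have "y < z" "t < z" "sorted_wrt (>) (zs @ [z])"
    using snoc.prems by (simp_all add: sorted_wrt_append)
  then have "plac_equiv [z, y, t] [y, z, t]"
    using plac_equiv_cab_acb snoc.prems(3) by blast
  from plac_equiv_cong[OF this, of zs "[]"]
  have "plac_equiv (zs @ [z, y, t]) (zs @ [y, z, t])" by simp
  moreover have "plac_equiv (zs @ [y, z]) (y # zs @ [z])"
    using snoc \<open>y < z\<close> \<open>sorted_wrt (>) (zs @ [z])\<close> by auto
  from plac_equiv_cong[OF this, of "[]" "[t]"]
  have "plac_equiv (zs @ [y, z, t]) (y # zs @ [z, t])" by simp
  ultimately show ?case by (simp add: plac_equiv_trans)
qed

lemma plac_equiv_move_across:
  fixes t u y :: "'a::order"
  assumes sorted: "sorted_wrt (>) (zs @ t # u # xs)"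
    and above: "\<forall>z\<in>set zs. y < z" and below: "\<forall>x\<in>set xs. x < y"
    and "sim_P t y" and "sim_P u y"
  shows "plac_equiv (zs @ t # u # xs @ [y]) (y # zs @ t # u # xs)"
proof -
  have "u < t" "sorted_wrt (>) (u # xs)" "sorted_wrt (>) (zs @ [t])"
    using sorted by (simp_all add: sorted_wrt_append)
  have "plac_equiv (u # xs @ [y]) (u # y # xs)"
    using plac_equiv_move_below \<open>sorted_wrt (>) (u # xs)\<close> below \<open>sim_P u y\<close>
    by (auto simp: sim_P_def)
  from plac_equiv_cong[OF this, of "zs @ [t]" "[]"]
  have "plac_equiv (zs @ t # u # xs @ [y]) (zs @ t # u # y # xs)" by simp
  moreover have "plac_equiv [t, u, y] [y, t, u]"
    using plac_equiv_cab_bca[of u y t] assms(4,5) \<open>u < t\<close> by (simp add: sim_P_def)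
  from plac_equiv_cong[OF this, of zs xs]
  have "plac_equiv (zs @ t # u # y # xs) (zs @ y # t # u # xs)" by simp
  moreover have "plac_equiv (zs @ [y, t]) (y # zs @ [t])"
    using plac_equiv_move_above \<open>sorted_wrt (>) (zs @ [t])\<close> above \<open>sim_P t y\<close>
    by (auto simp: sim_P_def)
  from plac_equiv_cong[OF this, of "[]" "u # xs"]
  have "plac_equiv (zs @ y # t # u # xs) (y # zs @ t # u # xs)" by simp
  ultimately show ?thesis by (meson plac_equiv_trans)
qed

lemma plac_equiv_append_commute:
  assumes "\<forall>y\<in>set B. plac_equiv (A @ [y]) (y # A)"
  shows "plac_equiv (A @ B) (B @ A)"
  using assms
proof (induction B)
  case Nil
  then show ?case by (simp add: plac_equiv_refl)
next
  case (Cons y B)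
  from plac_equiv_cong[of "A @ [y]" "y # A" "[]" B] Cons.prems
  have "plac_equiv (A @ y # B) (y # A @ B)" by simp
  moreover from plac_equiv_cong[of "A @ B" "B @ A" "[y]" "[]"] Cons
  have "plac_equiv (y # A @ B) (y # B @ A)" by simp
  ultimately show ?case by (simp add: plac_equiv_trans)
qed


lemma strictly_decreasing_index_less:
  fixes a :: "nat \<Rightarrow> 'a::order"
  assumes "strictly_decreasing (map a (rev [1..<m]))" and "1 \<le> i" "i < j" "j < m"
  shows "a i < a j"
proof -
  have "sorted_wrt (\<lambda>x y. a x < a y) [1..<m]"
    using assms(1) by (simp add: strictly_decreasing_def sorted_wrt_map sorted_wrt_rev)
  then have "a ([1..<m] ! (i - 1)) < a ([1..<m] ! (j - 1))"
    using assms(2-4) by (simp only: sorted_wrt_iff_nth_less length_upt)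
  then show ?thesis
    using assms(2-4) by simp
qed

lemma rev_upt_split_at:
  assumes "1 \<le> i" "i + 2 \<le> m"
  shows "rev [1..<m] = rev [i+2..<m] @ (i + 1) # i # rev [1..<i]"
proof -
  have "[1..<m] = [1..<i] @ [i..<m]"
    using upt_add_eq_append[of 1 i "m - i"] assms by simp
  also have "[i..<m] = i # (i + 1) # [i+2..<m]"
    using assms by (simp add: upt_conv_Cons)
  finally show ?thesis by simp
qed


lemma plac_equiv_move_b_across_a:
  fixes a b :: "nat \<Rightarrow> 'a::order"
  assumes decr: "strictly_decreasing (map a (rev [1..<n+2]))"
    and i: "1 \<le> i" "i \<le> n"
    and "sim_P (a i) (b i)" and "sim_P (a (i+1)) (b i)"
    and below: "1 < i \<Longrightarrow> a (i-1) < b i"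
    and above: "i < n \<Longrightarrow> b i < a (i+2)"
  shows "plac_equiv (map a (rev [1..<n+2]) @ [b i]) (b i # map a (rev [1..<n+2]))"
proof -
  have a_le: "a j \<le> a k" if "1 \<le> j" "j \<le> k" "k \<le> n + 1" for j k
    using strictly_decreasing_index_less[OF decr, of j k] that by (cases "j = k") auto
  have split: "map a (rev [1..<n+2])
      = map a (rev [i+2..<n+2]) @ a (i+1) # a i # map a (rev [1..<i])"
    using rev_upt_split_at[of i "n+2"] i by simp
  have above_b: "\<forall>z\<in>set (map a (rev [i+2..<n+2])). b i < z"
  proof
    fix z assume "z \<in> set (map a (rev [i+2..<n+2]))"
    then obtain j where j: "i + 2 \<le> j" "j \<le> n + 1" and "z = a j" by auto
    have "b i < a (i+2)" using above j by simp
    also have "a (i+2) \<le> a j" using a_le i j by simp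
    finally show "b i < z" using \<open>z = a j\<close> by simp
  qed
  have below_b: "\<forall>x\<in>set (map a (rev [1..<i])). x < b i"
  proof
    fix x assume "x \<in> set (map a (rev [1..<i]))"
    then obtain j where j: "1 \<le> j" "j < i" and "x = a j" by auto
    have "a j \<le> a (i-1)" using a_le i j by simp
    also have "a (i-1) < b i" using below j by simp
    finally show "x < b i" using \<open>x = a j\<close> by simp
  qed
  have "sorted_wrt (>) (map a (rev [i+2..<n+2]) @ a (i+1) # a i # map a (rev [1..<i]))"
    using decr unfolding split strictly_decreasing_def .
  from plac_equiv_move_across[OF this above_b below_b assms(5,4)]
  show ?thesis
    unfolding split by (simp only: append_assoc append_Cons)
qed

theorem mainTheorem15:
  fixes a b :: "nat \<Rightarrow> 'a::order" and n :: nat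
  assumes "finite (UNIV :: 'a set)"
    and "three_one_free TYPE('a)"
    and "strictly_decreasing (map a (rev [1..<n+2]))"
    and "strictly_decreasing (map b (rev [1..<n+1]))"
    and "\<forall>i\<in>{1..n}. sim_P (a i) (b i)"
    and "\<forall>i\<in>{1..n}. sim_P (a (i+1)) (b i)"
    and "\<forall>i\<in>{1..n-1}. a i < b (i+1)"
    and "\<forall>i\<in>{1..n-1}. b i < a (i+2)"
  shows "(\<lambda>w. ncmul (ncmon (map a (rev [1..<n+2]))) (ncmon (map b (rev [1..<n+1]))) w
             - ncmul (ncmon (map b (rev [1..<n+1]))) (ncmon (map a (rev [1..<n+2]))) w)
         \<in> I_plac"
proof -
  have "\<forall>y\<in>set (map b (rev [1..<n+1])).
          plac_equiv (map a (rev [1..<n+2]) @ [y]) (y # map a (rev [1..<n+2]))"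
  proof
    fix y assume "y \<in> set (map b (rev [1..<n+1]))"
    then obtain i where i: "1 \<le> i" "i \<le> n" and "y = b i" by auto
    have "a (i-1) < b i" if "1 < i"
    proof -
      have "i - 1 \<in> {1..n-1}" using i that by auto
      then have "a (i-1) < b (i - 1 + 1)" using assms(7) by blast
      then show ?thesis using that by simp
    qed
    then show "plac_equiv (map a (rev [1..<n+2]) @ [y]) (y # map a (rev [1..<n+2]))"
      unfolding \<open>y = b i\<close>
      using plac_equiv_move_b_across_a[OF assms(3) i] assms(5,6,8) i by simp
  qed
  then show ?thesis
    using plac_equiv_append_commute unfolding plac_equiv_def ncmul_ncmon by blast
qed

end
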